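(* For positive integers $n, m$ with $m \le n$ define $$f(n,m) = \sum_{k=0}^{m-1} \binom{n}{k} \left(\frac{m}{n}\right)^k \left(1 - \frac{m}{n}\right)^{n-k}.$$ Then for every integer $n \geq 100$, $f(n,m)$ is an increasing function of $m$ for $1 \le m \leq 11$, i.e. $f(n,1) < f(n,2) < \cdots < f(n,11)$.
   Context: $f(n,m)$ is the probability that a binomial random variable with $n$ trials and success probability $m/n$ is at most $m-1$. *)

theory Defs
  imports Complex_Main
begin

definition f :: "nat \<Rightarrow> nat \<Rightarrow> real" where
  "f n m = (\<Sum>k<m. real (n choose k) * (real m / real n) ^ k * (1 - real m / real n) ^ (n - k))"

end

theory Submission
  imports Defs
begin

text \<open>
  Let F(x) = P(Bin(n, x) < m) and b(x) = C(n, m) x^m (1 - x)^(n - m), so that f n m = F(m/n) and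
  f n (m + 1) - f n m = b((m + 1)/n) - (F(m/n) - F((m + 1)/n)). Since
  F'(x) = - m C(n, m) x^(m - 1) (1 - x)^(n - m) and x^(m - 1) (1 - x)^(n - m) decreases beyond its
  mode (m - 1)/(n - 1) < m/n, the decrease of F over each tenth of [m/n, (m + 1)/n] is bounded by
  the value of -F' at the left end of that tenth. Compared with b((m + 1)/n), the factor
  (1 - x)^(n - m) at x = (m + j/10)/n contributes at most exp(9/89)^(10 - j) once n - m >= 90.
  What remains is an inequality in m alone, checked numerically for m <= 10.
\<close>

definition binomial_cdf :: "nat \<Rightarrow> nat \<Rightarrow> real \<Rightarrow> real" where
  "binomial_cdf n m x = (\<Sum>k<m. real (n choose k) * x ^ k * (1 - x) ^ (n - k))"

lemma f_eq_binomial_cdf: "f n m = binomial_cdf n m (real m / real n)"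
  by (simp add: f_def binomial_cdf_def)

lemma binomial_cdf_Suc:
  "binomial_cdf n (Suc m) x = binomial_cdf n m x + real (n choose m) * x ^ m * (1 - x) ^ (n - m)"
  by (simp add: binomial_cdf_def)

lemma Suc_times_binomial_eq_diff_times:
  "real (Suc k) * real (n choose Suc k) = real (n - k) * real (n choose k)"
  by (metis binomial_absorption binomial_absorb_comp of_nat_mult)

lemma has_real_derivative_power_times_compl_power:
  "((\<lambda>x::real. x ^ Suc i * (1 - x) ^ k) has_real_derivative
     real (Suc i) * x ^ i * (1 - x) ^ k - real k * x ^ Suc i * (1 - x) ^ (k - 1)) (at x)"
  by (rule derivative_eq_intros refl)+ (simp add: algebra_simps)

lemma binomial_cdf_has_real_derivative:
  assumes "i < n"
  shows "(binomial_cdf n (Suc i) has_real_derivative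
           - (real (n - i) * real (n choose i) * x ^ i * (1 - x) ^ (n - Suc i))) (at x)"
  using assms
proof (induction i)
  case 0
  have "binomial_cdf n (Suc 0) = (\<lambda>x. (1 - x) ^ n)"
    by (simp add: binomial_cdf_def fun_eq_iff)
  then show ?case
    by (auto intro!: derivative_eq_intros)
next
  case (Suc i)
  have cdf: "binomial_cdf n (Suc (Suc i)) =
      (\<lambda>x. binomial_cdf n (Suc i) x + real (n choose Suc i) * (x ^ Suc i * (1 - x) ^ (n - Suc i)))"
    by (simp add: binomial_cdf_Suc fun_eq_iff)
  have "(binomial_cdf n (Suc (Suc i)) has_real_derivative
      - (real (n - i) * real (n choose i) * x ^ i * (1 - x) ^ (n - Suc i))
      + real (n choose Suc i) * (real (Suc i) * x ^ i * (1 - x) ^ (n - Suc i)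
          - real (n - Suc i) * x ^ Suc i * (1 - x) ^ (n - Suc i - 1))) (at x)"
    unfolding cdf using Suc
    by (intro DERIV_add DERIV_cmult has_real_derivative_power_times_compl_power) simp
  moreover have "real (n choose Suc i) * (real (Suc i) * x ^ i * (1 - x) ^ (n - Suc i))
      = real (n - i) * real (n choose i) * x ^ i * (1 - x) ^ (n - Suc i)"
    using Suc_times_binomial_eq_diff_times[of i n] by (metis mult.assoc mult.commute)
  ultimately show ?case
    by (simp only: right_diff_distrib) (simp add: algebra_simps)
qed

lemma power_times_compl_power_antimono:
  fixes a z :: real
  assumes "0 \<le> a" "a \<le> z" "z \<le> 1" "0 < k" "real i \<le> real (i + k) * a"
  shows "z ^ i * (1 - z) ^ k \<le> a ^ i * (1 - a) ^ k"
proof (cases i)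
  case 0
  then show ?thesis
    using assms by (simp add: power_mono)
next
  case (Suc j)
  have "z ^ Suc j * (1 - z) ^ k \<le> a ^ Suc j * (1 - a) ^ k"
  proof (rule DERIV_nonpos_imp_nonincreasing[OF \<open>a \<le> z\<close>])
    fix x
    assume x: "a \<le> x" "x \<le> z"
    have "real i \<le> real (i + k) * x"
      using assms x by (meson mult_left_mono of_nat_0_le_iff order_trans)
    then have past_mode: "real (Suc j) * (1 - x) \<le> real k * x"
      using Suc by (simp add: algebra_simps)
    have compl_power: "(1 - x) ^ k = (1 - x) * (1 - x) ^ (k - 1)"
      using \<open>0 < k\<close> by (simp add: power_eq_if)
    have "real (Suc j) * x ^ j * (1 - x) ^ k - real k * x ^ Suc j * (1 - x) ^ (k - 1)
        = (real (Suc j) * (1 - x) - real k * x) * (x ^ j * (1 - x) ^ (k - 1))"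
      unfolding compl_power by (simp add: algebra_simps)
    also have "\<dots> \<le> 0"
      using past_mode x assms by (intro mult_nonpos_nonneg) auto
    finally show "\<exists>y. ((\<lambda>x. x ^ Suc j * (1 - x) ^ k) has_real_derivative y) (at x) \<and> y \<le> 0"
      using has_real_derivative_power_times_compl_power by blast
  qed
  then show ?thesis
    using Suc by simp
qed

lemma binomial_cdf_decrease_le:
  assumes "0 \<le> a" "a < b" "b \<le> 1" "Suc i < n" "real i \<le> (real n - 1) * a"
  shows "binomial_cdf n (Suc i) a - binomial_cdf n (Suc i) b
           \<le> (b - a) * (real (n - i) * real (n choose i) * a ^ i * (1 - a) ^ (n - Suc i))"
proof -
  obtain z where z: "a < z" "z < b" and mvt: "binomial_cdf n (Suc i) b - binomial_cdf n (Suc i) a =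
      (b - a) * - (real (n - i) * real (n choose i) * z ^ i * (1 - z) ^ (n - Suc i))"
    using MVT2[OF \<open>a < b\<close>, of "binomial_cdf n (Suc i)"] binomial_cdf_has_real_derivative[of i n] assms(4)
    by force
  have "z ^ i * (1 - z) ^ (n - Suc i) \<le> a ^ i * (1 - a) ^ (n - Suc i)"
    using assms z by (intro power_times_compl_power_antimono) (auto simp: of_nat_diff)
  then have "(b - a) * (real (n - i) * real (n choose i)) * (z ^ i * (1 - z) ^ (n - Suc i))
      \<le> (b - a) * (real (n - i) * real (n choose i)) * (a ^ i * (1 - a) ^ (n - Suc i))"
    using \<open>a < b\<close> by (intro mult_left_mono) auto
  then show ?thesis
    using mvt by (simp add: algebra_simps)
qed

lemma binomial_cdf_tenth_decrease_le:
  assumes "m = Suc i" "m < n" "real m \<le> t" "t + 1/10 \<le> real n"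
  shows "binomial_cdf n m (t / n) - binomial_cdf n m ((t + 1/10) / n)
           \<le> real m * real (n choose m) / (10 * real n ^ m) * t ^ i * (1 - t / n) ^ (n - m)"
proof -
  have n: "real n > 0"
    using assms by simp
  have "real i * real n \<le> (real n - 1) * real m"
    using assms by (simp add: algebra_simps)
  also have "\<dots> \<le> (real n - 1) * t"
    using assms by (intro mult_left_mono) auto
  finally have "real i \<le> (real n - 1) * (t / n)"
    using n by (simp add: field_simps)
  then have "binomial_cdf n m (t / n) - binomial_cdf n m ((t + 1/10) / n)
      \<le> ((t + 1/10) / n - t / n) * (real (n - i) * real (n choose i) * (t / n) ^ i * (1 - t / n) ^ (n - m))"
    using assms n unfolding \<open>m = Suc i\<close>
    by (intro binomial_cdf_decrease_le) (auto simp: divide_strict_right_mono field_simps)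
  also have "\<dots> = real m * real (n choose m) / (10 * real n ^ m) * t ^ i * (1 - t / n) ^ (n - m)"
  proof -
    have "((t + 1/10) / n - t / n) * (c * (t / n) ^ i * p) = c / (10 * real n ^ m) * t ^ i * p"
      for c p :: real
      using n \<open>m = Suc i\<close> by (simp add: field_simps power_divide)
    moreover have "real (n - i) * real (n choose i) = real m * real (n choose m)"
      using Suc_times_binomial_eq_diff_times[of i n] \<open>m = Suc i\<close> by simp
    ultimately show ?thesis
      by simp
  qed
  finally show ?thesis .
qed

lemma exp_9_div_89_le: "exp (9/89 :: real) \<le> 55321/50000"
proof -
  define e :: real where "e = 9/89"
  obtain t where t: "\<bar>t\<bar> \<le> \<bar>e\<bar>" and taylor: "exp e = (\<Sum>k<4. e ^ k / fact k) + exp t / fact 4 * e ^ 4"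
    using Maclaurin_exp_le[of e 4] by blast
  have "exp t \<le> exp e"
    using t by (simp add: e_def)
  then have "exp t / fact 4 * e ^ 4 \<le> exp e / fact 4 * e ^ 4"
    by (intro mult_right_mono divide_right_mono) auto
  then have "exp e \<le> (\<Sum>k<4. e ^ k / fact k) + exp e / fact 4 * e ^ 4"
    using taylor by linarith
  then have "exp e * (1 - e ^ 4 / 24) \<le> (\<Sum>k<4. e ^ k / fact k)"
    by (simp add: algebra_simps fact_numeral)
  also have "\<dots> \<le> 55321/50000 * (1 - e ^ 4 / 24)"
    by (simp add: e_def lessThan_nat_numeral fact_numeral power_divide)
  finally show ?thesis
    by (simp add: e_def power_divide)
qed

lemma shifted_ratio_power_le:
  fixes N j :: nat
  assumes "90 \<le> N" "j \<le> 10"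
  shows "((real N - real j / 10) / (real N - 1)) ^ N \<le> (55321/50000) ^ (10 - j)"
proof -
  define d where "d = (1 - real j / 10) / (real N - 1)"
  have N: "real N - 1 > 0"
    using assms by simp
  have "(real N - real j / 10) / (real N - 1) = 1 + d"
    unfolding d_def using N by (simp add: field_simps)
  moreover have "(1 + d) ^ N \<le> exp d ^ N"
    using assms N by (intro power_mono) (auto simp: d_def)
  moreover have "real N * d = (1 - real j / 10) * (real N / (real N - 1))"
    unfolding d_def by simp
  moreover have "\<dots> \<le> (1 - real j / 10) * (90 / 89)"
    using assms N by (intro mult_left_mono) (auto simp: field_simps)
  moreover have "(1 - real j / 10) * (90 / 89) = real (10 - j) * (9 / 89)"
    using assms by (simp add: of_nat_diff field_simps)
  moreover have "exp (9/89 :: real) ^ (10 - j) \<le> (55321/50000) ^ (10 - j)"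
    using exp_9_div_89_le by (intro power_mono) auto
  ultimately show ?thesis
    by (smt (verit) exp_of_nat_mult exp_le_cancel_iff)
qed

lemma riemann_sum_numeric_lt:
  assumes "i \<le> 9"
  shows "(\<Sum>j<10. real (Suc i) / 10 * (real (Suc i) + real j / 10) ^ i * (55321/50000) ^ (10 - j))
           < real (Suc (Suc i)) ^ Suc i"
proof -
  have "i \<in> {0, 1, 2, 3, 4, 5, 6, 7, 8, 9}"
    using assms by auto
  then show ?thesis
    by (simp add: lessThan_nat_numeral, elim insertE; simp add: power_divide)
qed

lemma binomial_cdf_tenth_decrease_le_pmf:
  assumes "m = Suc i" "m + 90 \<le> n" "j < 10"
  shows "binomial_cdf n m ((real m + real j / 10) / n) - binomial_cdf n m ((real m + real (Suc j) / 10) / n)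
           \<le> real (n choose m) * (1 - (real m + 1) / n) ^ (n - m) / real n ^ m
               * (real m / 10 * (real m + real j / 10) ^ i * (55321/50000) ^ (10 - j))"
proof -
  define t where "t = real m + real j / 10"
  define N where "N = n - m"
  have n: "real n = real N + real m" "real N \<ge> 90"
    using assms by (auto simp: N_def)
  have "1 - t / n = (real N - real j / 10) / n" "1 - (real m + 1) / n = (real N - 1) / n"
    using n by (simp_all add: t_def field_simps)
  then have "1 - t / n = (1 - (real m + 1) / n) * ((real N - real j / 10) / (real N - 1))"
    using n by simp
  then have "(1 - t / n) ^ N = (1 - (real m + 1) / n) ^ N * ((real N - real j / 10) / (real N - 1)) ^ N"
    by (simp only: power_mult_distrib)
  also have "\<dots> \<le> (1 - (real m + 1) / n) ^ N * (55321/50000) ^ (10 - j)"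
    using n assms by (intro mult_left_mono shifted_ratio_power_le) (auto simp: field_simps)
  finally have compl_power: "(1 - t / n) ^ N \<le> (1 - (real m + 1) / n) ^ N * (55321/50000) ^ (10 - j)" .
  have "binomial_cdf n m (t / n) - binomial_cdf n m ((t + 1/10) / n)
      \<le> real m * real (n choose m) / (10 * real n ^ m) * t ^ i * (1 - t / n) ^ N"
    using assms n unfolding N_def by (intro binomial_cdf_tenth_decrease_le) (auto simp: t_def)
  also have "\<dots> \<le> real m * real (n choose m) / (10 * real n ^ m) * t ^ i
      * ((1 - (real m + 1) / n) ^ N * (55321/50000) ^ (10 - j))"
    using compl_power n by (intro mult_left_mono) (auto simp: t_def)
  moreover have "real m + real (Suc j) / 10 = t + 1/10"
    by (simp add: t_def add_divide_distrib)
  ultimately show ?thesis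
    unfolding t_def[symmetric] N_def[symmetric] by (simp add: mult_ac)
qed

theorem lemma4:
  fixes n m :: nat
  assumes "n \<ge> 100" and "1 \<le> m" and "m < 11"
  shows "f n m < f n (Suc m)"
proof -
  obtain i where m: "m = Suc i" "i \<le> 9"
    using assms by (cases m) auto
  define x where "x j = (real m + real j / 10) / real n" for j :: nat
  define K where "K = real (n choose m) * (1 - x 10) ^ (n - m) / real n ^ m"
  have "K > 0"
    using assms by (simp add: K_def x_def field_simps)
  have "binomial_cdf n m (x 0) - binomial_cdf n m (x 10)
      = (\<Sum>j<10. binomial_cdf n m (x j) - binomial_cdf n m (x (Suc j)))"
    by (rule sum_lessThan_telescope'[symmetric])
  also have "\<dots> \<le> (\<Sum>j<10. K * (real m / 10 * (real m + real j / 10) ^ i * (55321/50000) ^ (10 - j)))"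
    using binomial_cdf_tenth_decrease_le_pmf[OF m(1)] assms
    by (intro sum_mono) (simp add: x_def K_def)
  also have "\<dots> = K * (\<Sum>j<10. real m / 10 * (real m + real j / 10) ^ i * (55321/50000) ^ (10 - j))"
    by (simp add: sum_distrib_left)
  also have "\<dots> < K * real (Suc m) ^ m"
    using riemann_sum_numeric_lt[OF m(2)] \<open>K > 0\<close> unfolding m(1) by (rule mult_strict_left_mono)
  also have "\<dots> = real (n choose m) * x 10 ^ m * (1 - x 10) ^ (n - m)"
    by (simp add: K_def x_def power_divide add.commute)
  finally show ?thesis
    by (simp add: f_eq_binomial_cdf binomial_cdf_Suc x_def add.commute)
qed

end
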